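(* Let $f:X\to Y$ be a morphism in $\mathcal{C}^J(\mathcal{P}(\Lambda))$, $X=(X^n,d^n)$, $Y=(Y^n,\partial^n)$, and let $i\in\mathbb{Z}$. Suppose $f$ is sirreducible with irreducible component $f^i:X^i\to Y^i$ and is in the following standard form: for $n<i$, $X^n=Y^n\oplus X'^n$ and $f^n=(1\ \ 0)$; for $n\le i-2$, $d^n=\begin{pmatrix}\partial^n&0\\ b^n&e^n\end{pmatrix}$ with $b^n:Y^n\to X'^{n+1}$, $e^n:X'^n\to X'^{n+1}$; $d^{i-1}=(c^{i-1}\ \ e^{i-1}):Y^{i-1}\oplus X'^{i-1}\to X^i$; for $n>i$, $Y^n=X^n\oplus Y'^n$ and $f^n=\begin{pmatrix}1\\0\end{pmatrix}$; $\partial^i=\begin{pmatrix}\ell^i\\ e^i\end{pmatrix}:Y^i\to X^{i+1}\oplus Y'^{i+1}$; and for $n\ge i+1$, $\partial^n=\begin{pmatrix}d^n&a^n\\0&e^n\end{pmatrix}$ with $a^n:Y'^n\to X^{n+1}$, $e^n:Y'^n\to Y'^{n+1}$. Then the standard triangle $X\xrightarrow{f}Y\to C_f\to X[1]$ is isomorphic, in $\mathcal{K}^J(\mathcal{P}(\Lambda))$, to the triangle $X\xrightarrow{f}Y\xrightarrow{g}Z\xrightarrow{w}X[1]$, where $Z^n=X'^{n+1}$ for $n<i-1$, $Z^{i-1}=X^i$, $Z^i=Y^i$, $Z^n=Y'^n$ for $n>i$, with differential $d_Z^n=-e^{n+1}$ for $n\le i-2$, $d_Z^{i-1}=f^i$,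 $d_Z^n=e^n$ for $n\ge i$; $g^n=b^n$ for $n<i-1$, $g^{i-1}=c^{i-1}$, $g^i=1$, $g^n=(0\ \ 1):X^n\oplus Y'^n\to Y'^n$ for $n>i$; $w^n=\begin{pmatrix}0\\1\end{pmatrix}:X'^{n+1}\to Y^{n+1}\oplus X'^{n+1}$ for $n<i-1$, $w^{i-1}=1_{X^i}$, $w^i=-\ell^i$, $w^n=-a^n$ for $n>i$.
   Context: $\Lambda$ is a finite-dimensional non-semisimple algebra over a field $k$, $\mathcal{P}(\Lambda)$ the category of finitely generated projective right $\Lambda$-modules. Complexes are cochain complexes with $d^n:X^n\to X^{n+1}$; for an interval $J\subseteq\mathbb{Z}$, $\mathcal{C}^J(\mathcal{P}(\Lambda))$ denotes complexes of finitely generated projective modules vanishing outside $J$ and $\mathcal{K}^J(\mathcal{P}(\Lambda))$ its homotopy category, triangulated with shift $X[1]^n=X^{n+1}$, $d_{X[1]}=-d_X$. The mapping cone of $f:X\to Y$ has $C_f^n=X^{n+1}\oplus Y^n$ with differential $\begin{pmatrix}-d_X^{n+1}&0\\ f^{n+1}&d_Y^n\end{pmatrix}$, and the standard triangle is $X\xrightarrow{f}Y\to C_f\to X[1]$ with the canonical inclusion and projection. A morphism of complexes $f$ is sirreducible if there is exactly one index $i$ with $f^i$ irreducible in $\mathcal{P}(\Lambda)$, $f^n$ a split epimorphism for $n<i$ and a split monomorphism for $n>i$. *)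

theory Defs
  imports Main "Jordan_Normal_Form.Matrix"
begin

text \<open>Lambda is modelled by a type 'a of class ring_1, together with a scalar
multiplication by a field 'k making it a finite-dimensional k-algebra.\<close>

definition fd_algebra :: "('k::field \<Rightarrow> 'a::ring_1 \<Rightarrow> 'a) \<Rightarrow> bool" where
  "fd_algebra scale \<longleftrightarrow>
     (\<exists>B. finite_dimensional_vector_space scale B) \<and>
     (\<forall>c x y. scale c (x * y) = scale c x * y \<and> scale c (x * y) = x * scale c y)"

definition right_ideal :: "'a::ring_1 set \<Rightarrow> bool" where
  "right_ideal I \<longleftrightarrow> 0 \<in> I \<and> (\<forall>x\<in>I. \<forall>y\<in>I. x + y \<in> I) \<and> (\<forall>x\<in>I. - x \<in> I)
      \<and> (\<forall>x\<in>I. \<forall>r. x * r \<in> I)"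

text \<open>Lambda is semisimple iff the regular right module is semisimple, i.e. every
right ideal (submodule of Lambda_Lambda) is a direct summand.\<close>
definition semisimple_ring :: "'a::ring_1 itself \<Rightarrow> bool" where
  "semisimple_ring _ \<longleftrightarrow>
     (\<forall>I::'a set. right_ideal I \<longrightarrow> (\<exists>I'. right_ideal I' \<and> I \<inter> I' = {0} \<and>
        (\<forall>x. \<exists>a\<in>I. \<exists>b\<in>I'. x = a + b)))"

text \<open>A finitely generated projective right Lambda-module is represented as
e Lambda^m (column vectors, Lambda acting on the right) for an idempotent m x m
matrix e; a module homomorphism e Lambda^m \<rightarrow> e' Lambda^m' is left multiplication
by a matrix phi with e' phi = phi = phi e.  The identity of e is e itself.\<close>

definition pobj :: "'a::ring_1 mat \<Rightarrow> bool" where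
  "pobj e \<longleftrightarrow> e \<in> carrier_mat (dim_row e) (dim_row e) \<and> e * e = e"

definition phom :: "'a::ring_1 mat \<Rightarrow> 'a mat \<Rightarrow> 'a mat \<Rightarrow> bool" where
  "phom A B \<phi> \<longleftrightarrow> pobj A \<and> pobj B \<and> \<phi> \<in> carrier_mat (dim_row B) (dim_row A)
      \<and> B * \<phi> = \<phi> \<and> \<phi> * A = \<phi>"

definition split_mono :: "'a::ring_1 mat \<Rightarrow> 'a mat \<Rightarrow> 'a mat \<Rightarrow> bool" where
  "split_mono A B \<phi> \<longleftrightarrow> phom A B \<phi> \<and> (\<exists>r. phom B A r \<and> r * \<phi> = A)"

definition split_epi :: "'a::ring_1 mat \<Rightarrow> 'a mat \<Rightarrow> 'a mat \<Rightarrow> bool" where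
  "split_epi A B \<phi> \<longleftrightarrow> phom A B \<phi> \<and> (\<exists>s. phom B A s \<and> \<phi> * s = B)"

definition irreducible_mor :: "'a::ring_1 mat \<Rightarrow> 'a mat \<Rightarrow> 'a mat \<Rightarrow> bool" where
  "irreducible_mor A B \<phi> \<longleftrightarrow> phom A B \<phi> \<and> \<not> split_mono A B \<phi> \<and> \<not> split_epi A B \<phi> \<and>
     (\<forall>C h g. pobj C \<longrightarrow> phom A C h \<longrightarrow> phom C B g \<longrightarrow> \<phi> = g * h \<longrightarrow>
        split_mono A C h \<or> split_epi C B g)"

definition dsum :: "'a::ring_1 mat \<Rightarrow> 'a mat \<Rightarrow> 'a mat" where
  "dsum A B = four_block_mat A (0\<^sub>m (dim_row A) (dim_col B)) (0\<^sub>m (dim_row B) (dim_col A)) B"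

definition rowb :: "'a::ring_1 mat \<Rightarrow> 'a mat \<Rightarrow> 'a mat" where
  "rowb P Q = four_block_mat P Q (0\<^sub>m 0 (dim_col P)) (0\<^sub>m 0 (dim_col Q))"

definition colb :: "'a::ring_1 mat \<Rightarrow> 'a mat \<Rightarrow> 'a mat" where
  "colb P Q = four_block_mat P (0\<^sub>m (dim_row P) 0) Q (0\<^sub>m (dim_row Q) 0)"

definition blk :: "'a::ring_1 mat \<Rightarrow> 'a mat \<Rightarrow> 'a mat \<Rightarrow> 'a mat \<Rightarrow> 'a mat" where
  "blk A B C D = four_block_mat A B C D"

type_synonym 'a cplx = "(int \<Rightarrow> 'a mat) \<times> (int \<Rightarrow> 'a mat)"

definition is_complex :: "'a::ring_1 cplx \<Rightarrow> bool" where
  "is_complex X \<longleftrightarrow> (\<forall>n. phom (fst X n) (fst X (n+1)) (snd X n)) \<and>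
     (\<forall>n. snd X (n+1) * snd X n = 0\<^sub>m (dim_row (fst X (n+2))) (dim_row (fst X n)))"

definition is_interval :: "int set \<Rightarrow> bool" where
  "is_interval J \<longleftrightarrow> (\<forall>a b c. a \<in> J \<longrightarrow> c \<in> J \<longrightarrow> a \<le> b \<longrightarrow> b \<le> c \<longrightarrow> b \<in> J)"

definition in_CJ :: "int set \<Rightarrow> 'a::ring_1 cplx \<Rightarrow> bool" where
  "in_CJ J X \<longleftrightarrow> is_complex X \<and>
     (\<forall>n. n \<notin> J \<longrightarrow> fst X n = 0\<^sub>m (dim_row (fst X n)) (dim_row (fst X n)))"

definition chain_map :: "'a::ring_1 cplx \<Rightarrow> 'a cplx \<Rightarrow> (int \<Rightarrow> 'a mat) \<Rightarrow> bool" where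
  "chain_map X Y f \<longleftrightarrow> (\<forall>n. phom (fst X n) (fst Y n) (f n)) \<and>
     (\<forall>n. snd Y n * f n = f (n+1) * snd X n)"

definition homotopic :: "'a::ring_1 cplx \<Rightarrow> 'a cplx \<Rightarrow> (int \<Rightarrow> 'a mat) \<Rightarrow> (int \<Rightarrow> 'a mat) \<Rightarrow> bool" where
  "homotopic X Y f g \<longleftrightarrow> (\<exists>h. (\<forall>n. phom (fst X n) (fst Y (n-1)) (h n)) \<and>
     (\<forall>n. f n - g n = snd Y (n-1) * h n + h (n+1) * snd X n))"

definition comp_map :: "(int \<Rightarrow> 'a::ring_1 mat) \<Rightarrow> (int \<Rightarrow> 'a mat) \<Rightarrow> int \<Rightarrow> 'a mat" where
  "comp_map g f = (\<lambda>n. g n * f n)"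

definition id_map :: "'a::ring_1 cplx \<Rightarrow> int \<Rightarrow> 'a mat" where
  "id_map X = fst X"

definition K_iso :: "'a::ring_1 cplx \<Rightarrow> 'a cplx \<Rightarrow> (int \<Rightarrow> 'a mat) \<Rightarrow> bool" where
  "K_iso X Y f \<longleftrightarrow> chain_map X Y f \<and> (\<exists>g. chain_map Y X g \<and>
     homotopic X X (comp_map g f) (id_map X) \<and> homotopic Y Y (comp_map f g) (id_map Y))"

definition shift :: "'a::ring_1 cplx \<Rightarrow> 'a cplx" where
  "shift X = (\<lambda>n. fst X (n+1), \<lambda>n. - snd X (n+1))"

definition shift_map :: "(int \<Rightarrow> 'a::ring_1 mat) \<Rightarrow> int \<Rightarrow> 'a mat" where
  "shift_map f = (\<lambda>n. f (n+1))"

definition cone :: "'a::ring_1 cplx \<Rightarrow> 'a cplx \<Rightarrow> (int \<Rightarrow> 'a mat) \<Rightarrow> 'a cplx" where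
  "cone X Y f = (\<lambda>n. dsum (fst X (n+1)) (fst Y n),
     \<lambda>n. blk (- snd X (n+1)) (0\<^sub>m (dim_row (fst X (n+2))) (dim_row (fst Y n)))
             (f (n+1)) (snd Y n))"

definition cone_in :: "'a::ring_1 cplx \<Rightarrow> 'a cplx \<Rightarrow> int \<Rightarrow> 'a mat" where
  "cone_in X Y = (\<lambda>n. colb (0\<^sub>m (dim_row (fst X (n+1))) (dim_row (fst Y n))) (fst Y n))"

definition cone_pr :: "'a::ring_1 cplx \<Rightarrow> 'a cplx \<Rightarrow> int \<Rightarrow> 'a mat" where
  "cone_pr X Y = (\<lambda>n. rowb (fst X (n+1)) (0\<^sub>m (dim_row (fst X (n+1))) (dim_row (fst Y n))))"

definition tri_iso ::
  "'a::ring_1 cplx \<Rightarrow> 'a cplx \<Rightarrow> 'a cplx \<Rightarrow> (int \<Rightarrow> 'a mat) \<Rightarrow> (int \<Rightarrow> 'a mat) \<Rightarrow> (int \<Rightarrow> 'a mat) \<Rightarrow>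
   'a cplx \<Rightarrow> 'a cplx \<Rightarrow> 'a cplx \<Rightarrow> (int \<Rightarrow> 'a mat) \<Rightarrow> (int \<Rightarrow> 'a mat) \<Rightarrow> (int \<Rightarrow> 'a mat) \<Rightarrow> bool"
  where
  "tri_iso X Y Z u v w X' Y' Z' u' v' w' \<longleftrightarrow>
     (\<exists>\<alpha> \<beta> \<gamma>. K_iso X X' \<alpha> \<and> K_iso Y Y' \<beta> \<and> K_iso Z Z' \<gamma> \<and>
        homotopic X Y' (comp_map \<beta> u) (comp_map u' \<alpha>) \<and>
        homotopic Y Z' (comp_map \<gamma> v) (comp_map v' \<beta>) \<and>
        homotopic Z (shift X') (comp_map (shift_map \<alpha>) w) (comp_map w' \<gamma>))"

definition sirreducible :: "'a::ring_1 cplx \<Rightarrow> 'a cplx \<Rightarrow> (int \<Rightarrow> 'a mat) \<Rightarrow> bool" where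
  "sirreducible X Y f \<longleftrightarrow> (\<exists>i. (\<forall>j. irreducible_mor (fst X j) (fst Y j) (f j) \<longleftrightarrow> j = i) \<and>
     (\<forall>n<i. split_epi (fst X n) (fst Y n) (f n)) \<and>
     (\<forall>n>i. split_mono (fst X n) (fst Y n) (f n)))"

end

theory Submission
  imports Defs
begin

text \<open>The differential of the mapping cone \<open>C\<^sub>f\<^sup>n = X\<^sup>n\<^sup>+\<^sup>1 \<oplus> Y\<^sup>n\<close> has the component
  \<open>f\<^sup>n\<^sup>+\<^sup>1 : X\<^sup>n\<^sup>+\<^sup>1 \<rightarrow> Y\<^sup>n\<^sup>+\<^sup>1\<close>. In standard form this is the identity on the summand \<open>Y\<^sup>n\<^sup>+\<^sup>1\<close> of
  \<open>X\<^sup>n\<^sup>+\<^sup>1\<close> below \<open>i\<close> and on the summand \<open>X\<^sup>n\<^sup>+\<^sup>1\<close> of \<open>Y\<^sup>n\<^sup>+\<^sup>1\<close> above \<open>i\<close>, so in every degree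
  except \<open>i - 1\<close> the cone contains a contractible piece \<open>1 : M \<rightarrow> M\<close>. Cancelling all of them
  (Gaussian elimination) leaves \<open>X'\<^sup>n\<^sup>+\<^sup>1\<close>, \<open>X\<^sup>i\<close>, \<open>Y\<^sup>i\<close>, \<open>Y'\<^sup>n\<close> in the respective degrees, i.e.
  the complex \<open>Z\<close>. Concretely, the projection \<open>\<gamma> : C\<^sub>f \<rightarrow> Z\<close> and the inclusion \<open>\<delta> : Z \<rightarrow> C\<^sub>f\<close> are
  chain maps with \<open>\<gamma> \<delta> = 1\<close> and \<open>\<delta> \<gamma> \<simeq> 1\<close> via an explicit homotopy \<open>\<sigma>\<close>; moreover \<open>\<gamma>\<close> composed with
  the inclusion \<open>Y \<rightarrow> C\<^sub>f\<close> is \<open>g\<close>, and the projection \<open>C\<^sub>f \<rightarrow> X[1]\<close> is homotopic to \<open>w \<gamma>\<close>.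
  Hence \<open>\<gamma>\<close>, together with identities on \<open>X\<close> and \<open>Y\<close>, is the required isomorphism of
  triangles.\<close>

section \<open>Block matrices\<close>

lemma zero_mat_eq_iff: "0\<^sub>m r c = 0\<^sub>m r' c' \<longleftrightarrow> r = r' \<and> c = c'"
  by (metis index_zero_mat(2,3))

lemma uminus_zero_mat [simp]: "- 0\<^sub>m r c = (0\<^sub>m r c :: 'a::group_add mat)"
  by (rule eq_matI) auto

lemma add_zero_mat_dims:
  fixes A :: "'a::monoid_add mat"
  assumes "dim_row A = r" "dim_col A = c"
  shows "0\<^sub>m r c + A = A" "A + 0\<^sub>m r c = A"
  using assms by (auto intro!: eq_matI)

lemma diff_zero_mat_dims:
  fixes A :: "'a::group_add mat"
  assumes "dim_row A = r" "dim_col A = c"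
  shows "0\<^sub>m r c - A = - A" "A - 0\<^sub>m r c = A"
  using assms by (auto intro!: eq_matI)

lemma add_inverse_mat:
  fixes A :: "'a::group_add mat"
  shows "A - A = 0\<^sub>m (dim_row A) (dim_col A)" "- A + A = 0\<^sub>m (dim_row A) (dim_col A)"
    "A + - A = 0\<^sub>m (dim_row A) (dim_col A)"
  by (auto intro!: eq_matI)

lemma split_block_four_block_mat:
  assumes "dim_row B = dim_row A" "dim_col C = dim_col A" "dim_row D = dim_row C" "dim_col D = dim_col B"
  shows "split_block (four_block_mat A B C D) (dim_row A) (dim_col A) = (A, B, C, D)"
  using assms by (auto simp: split_block_def Let_def intro!: eq_matI)

lemma four_block_mat_eq_iff:
  assumes "dim_row A' = dim_row A" "dim_col A' = dim_col A" "dim_row D' = dim_row D" "dim_col D' = dim_col D"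
    "dim_row B = dim_row A" "dim_col B = dim_col D" "dim_row C = dim_row D" "dim_col C = dim_col A"
    "dim_row B' = dim_row A" "dim_col B' = dim_col D" "dim_row C' = dim_row D" "dim_col C' = dim_col A"
  shows "four_block_mat A B C D = four_block_mat A' B' C' D' \<longleftrightarrow> A = A' \<and> B = B' \<and> C = C' \<and> D = D'"
  using split_block_four_block_mat[of B A C D] split_block_four_block_mat[of B' A' C' D'] assms
  by (metis prod.inject)

lemma four_block_mat_eq_zero_iff:
  assumes "dim_row B = dim_row A" "dim_col B = dim_col D" "dim_row C = dim_row D" "dim_col C = dim_col A"
  shows "four_block_mat A B C D = 0\<^sub>m r c \<longleftrightarrow>
    dim_row A + dim_row D = r \<and> dim_col A + dim_col D = c \<and>
    A = 0\<^sub>m (dim_row A) (dim_col A) \<and> B = 0\<^sub>m (dim_row A) (dim_col D) \<and>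
    C = 0\<^sub>m (dim_row D) (dim_col A) \<and> D = 0\<^sub>m (dim_row D) (dim_col D)"
proof
  assume eq: "four_block_mat A B C D = 0\<^sub>m r c"
  then have rc: "dim_row A + dim_row D = r" "dim_col A + dim_col D = c"
    by (metis index_mat_four_block(2,3) index_zero_mat(2,3))+
  with eq have "four_block_mat A B C D = four_block_mat
      (0\<^sub>m (dim_row A) (dim_col A)) (0\<^sub>m (dim_row A) (dim_col D))
      (0\<^sub>m (dim_row D) (dim_col A)) (0\<^sub>m (dim_row D) (dim_col D))"
    by simp
  then show "dim_row A + dim_row D = r \<and> dim_col A + dim_col D = c \<and>
    A = 0\<^sub>m (dim_row A) (dim_col A) \<and> B = 0\<^sub>m (dim_row A) (dim_col D) \<and>
    C = 0\<^sub>m (dim_row D) (dim_col A) \<and> D = 0\<^sub>m (dim_row D) (dim_col D)"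
    using rc four_block_mat_eq_iff[of "0\<^sub>m (dim_row A) (dim_col A)" A "0\<^sub>m (dim_row D) (dim_col D)" D B C
       "0\<^sub>m (dim_row A) (dim_col D)" "0\<^sub>m (dim_row D) (dim_col A)"] assms
    by simp
qed (metis four_block_zero_mat)

lemma zero_eq_four_block_mat_iff:
  assumes "dim_row B = dim_row A" "dim_col B = dim_col D" "dim_row C = dim_row D" "dim_col C = dim_col A"
  shows "0\<^sub>m r c = four_block_mat A B C D \<longleftrightarrow>
    dim_row A + dim_row D = r \<and> dim_col A + dim_col D = c \<and>
    A = 0\<^sub>m (dim_row A) (dim_col A) \<and> B = 0\<^sub>m (dim_row A) (dim_col D) \<and>
    C = 0\<^sub>m (dim_row D) (dim_col A) \<and> D = 0\<^sub>m (dim_row D) (dim_col D)"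
  using four_block_mat_eq_zero_iff[OF assms, of r c] by metis

lemma four_block_mat_empty_blocks:
  assumes "dim_row B = dim_row A" "dim_col B = 0" "dim_row C = 0" "dim_col C = dim_col A"
    "dim_row D = 0" "dim_col D = 0"
  shows "four_block_mat A B C D = A"
  using assms by (intro eq_matI) auto

lemma mult_four_block_mat':
  fixes A1 B1 C1 D1 A2 B2 C2 D2 :: "'a::semiring_0 mat"
  assumes "dim_row B1 = dim_row A1" "dim_row D1 = dim_row C1" "dim_col C1 = dim_col A1" "dim_col D1 = dim_col B1"
    "dim_row B2 = dim_row A2" "dim_row D2 = dim_row C2" "dim_col C2 = dim_col A2" "dim_col D2 = dim_col B2"
    "dim_row A2 = dim_col A1" "dim_row C2 = dim_col B1"
  shows "four_block_mat A1 B1 C1 D1 * four_block_mat A2 B2 C2 D2 =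
    four_block_mat (A1 * A2 + B1 * C2) (A1 * B2 + B1 * D2) (C1 * A2 + D1 * C2) (C1 * B2 + D1 * D2)"
  by (rule mult_four_block_mat[of A1 "dim_row A1" "dim_col A1" B1 "dim_col B1" C1 "dim_row C1" D1
        A2 "dim_col A2" B2 "dim_col B2" C2 D2])
    (unfold carrier_mat_def mem_Collect_eq, use assms in \<open>simp_all only: prod.inject\<close>)

text \<open>The \<open>NO_MATCH\<close> guard keeps the next two rules off factors \<open>M\<close> that are themselves block
  matrices; those are multiplied blockwise by \<open>mult_four_block_mat'\<close>, so simplification stays
  confluent.\<close>

lemma mult_four_block_mat_row:
  fixes M A B C D :: "'a::semiring_0 mat"
  assumes "NO_MATCH (four_block_mat A' B' C' D') M"
    and "dim_row C = 0" "dim_row D = 0" "dim_row B = dim_row A" "dim_col M = dim_row A"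
      "dim_col C = dim_col A" "dim_col D = dim_col B"
  shows "M * four_block_mat A B C D = four_block_mat (M * A) (M * B) (0\<^sub>m 0 (dim_col A)) (0\<^sub>m 0 (dim_col B))"
proof -
  have "M = four_block_mat M (0\<^sub>m (dim_row M) 0) (0\<^sub>m 0 (dim_col M)) (0\<^sub>m 0 0)"
    by (rule eq_matI) auto
  then have "M * four_block_mat A B C D =
      four_block_mat M (0\<^sub>m (dim_row M) 0) (0\<^sub>m 0 (dim_col M)) (0\<^sub>m 0 0) * four_block_mat A B C D"
    by simp
  also have "\<dots> = four_block_mat (M * A + 0\<^sub>m (dim_row M) 0 * C) (M * B + 0\<^sub>m (dim_row M) 0 * D)
      (0\<^sub>m 0 (dim_col M) * A + 0\<^sub>m 0 0 * C) (0\<^sub>m 0 (dim_col M) * B + 0\<^sub>m 0 0 * D)"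
    by (rule mult_four_block_mat') (use assms in auto)
  also have "\<dots> = four_block_mat (M * A) (M * B) (0\<^sub>m 0 (dim_col A)) (0\<^sub>m 0 (dim_col B))"
    using assms by (simp add: add_zero_mat_dims)
  finally show ?thesis .
qed

lemma four_block_mat_col_mult:
  fixes M A B C D :: "'a::semiring_0 mat"
  assumes "NO_MATCH (four_block_mat A' B' C' D') M"
    and "dim_col B = 0" "dim_col D = 0" "dim_row B = dim_row A" "dim_row M = dim_col A"
      "dim_col C = dim_col A" "dim_row D = dim_row C"
  shows "four_block_mat A B C D * M = four_block_mat (A * M) (0\<^sub>m (dim_row A) 0) (C * M) (0\<^sub>m (dim_row C) 0)"
proof -
  have "M = four_block_mat M (0\<^sub>m (dim_row M) 0) (0\<^sub>m 0 (dim_col M)) (0\<^sub>m 0 0)"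
    by (rule eq_matI) auto
  then have "four_block_mat A B C D * M =
      four_block_mat A B C D * four_block_mat M (0\<^sub>m (dim_row M) 0) (0\<^sub>m 0 (dim_col M)) (0\<^sub>m 0 0)"
    by simp
  also have "\<dots> = four_block_mat (A * M + B * 0\<^sub>m 0 (dim_col M)) (A * 0\<^sub>m (dim_row M) 0 + B * 0\<^sub>m 0 0)
      (C * M + D * 0\<^sub>m 0 (dim_col M)) (C * 0\<^sub>m (dim_row M) 0 + D * 0\<^sub>m 0 0)"
    by (rule mult_four_block_mat') (use assms in auto)
  also have "\<dots> = four_block_mat (A * M) (0\<^sub>m (dim_row A) 0) (C * M) (0\<^sub>m (dim_row C) 0)"
    using assms by (simp add: add_zero_mat_dims)
  finally show ?thesis .
qed

lemma uminus_four_block_mat: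
  fixes A B C D :: "'a::group_add mat"
  assumes "dim_row B = dim_row A" "dim_col B = dim_col D" "dim_row C = dim_row D" "dim_col C = dim_col A"
  shows "- four_block_mat A B C D = four_block_mat (- A) (- B) (- C) (- D)"
  using assms by (intro eq_matI) auto

lemma add_four_block_mat':
  fixes A B C D A' B' C' D' :: "'a::monoid_add mat"
  assumes "dim_row A' = dim_row A" "dim_col A' = dim_col A" "dim_row D' = dim_row D" "dim_col D' = dim_col D"
    "dim_row B = dim_row A" "dim_col B = dim_col D" "dim_row C = dim_row D" "dim_col C = dim_col A"
    "dim_row B' = dim_row A" "dim_col B' = dim_col D" "dim_row C' = dim_row D" "dim_col C' = dim_col A"
  shows "four_block_mat A B C D + four_block_mat A' B' C' D' =
    four_block_mat (A + A') (B + B') (C + C') (D + D')"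
  using assms by (intro eq_matI) auto

lemma minus_four_block_mat:
  fixes A B C D A' B' C' D' :: "'a::group_add mat"
  assumes "dim_row A' = dim_row A" "dim_col A' = dim_col A" "dim_row D' = dim_row D" "dim_col D' = dim_col D"
    "dim_row B = dim_row A" "dim_col B = dim_col D" "dim_row C = dim_row D" "dim_col C = dim_col A"
    "dim_row B' = dim_row A" "dim_col B' = dim_col D" "dim_row C' = dim_row D" "dim_col C' = dim_col A"
  shows "four_block_mat A B C D - four_block_mat A' B' C' D' =
    four_block_mat (A - A') (B - B') (C - C') (D - D')"
  using assms by (intro eq_matI) auto

lemma four_block_mat_regroup_rows:
  fixes A B C D :: "'a::zero mat"
  assumes "dim_row B = dim_row A" "dim_row D = dim_row C" "dim_col C = dim_col A" "dim_col D = dim_col B"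
    "r = dim_row A + dim_row C" "k = dim_col A + dim_col B" "c' = c"
  shows "four_block_mat (four_block_mat A B C D) (0\<^sub>m r c) (0\<^sub>m 0 k) (0\<^sub>m 0 c') =
    four_block_mat (four_block_mat A B (0\<^sub>m 0 (dim_col A)) (0\<^sub>m 0 (dim_col B))) (0\<^sub>m (dim_row A) c)
      (four_block_mat C D (0\<^sub>m 0 (dim_col C)) (0\<^sub>m 0 (dim_col D))) (0\<^sub>m (dim_row C) c)"
  using assms by (intro eq_matI) (auto simp: nat_diff_split_asm)

lemma add_eq_zero_mat_imp_eq_uminus:
  fixes A B :: "'a::group_add mat"
  assumes "A + B = 0\<^sub>m r c" "dim_row A = r" "dim_col A = c" "dim_row B = r" "dim_col B = c"
  shows "A = - B"
proof (rule eq_matI)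
  fix p q assume "p < dim_row (- B)" "q < dim_col (- B)"
  with assms have "A $$ (p, q) + B $$ (p, q) = 0"
    by (metis index_add_mat(1) index_uminus_mat(2,3) index_zero_mat(1))
  then show "A $$ (p, q) = (- B) $$ (p, q)"
    using \<open>p < dim_row (- B)\<close> \<open>q < dim_col (- B)\<close> by (simp add: eq_neg_iff_add_eq_0)
qed (use assms in auto)

lemmas block_simps = mult_four_block_mat' uminus_four_block_mat add_four_block_mat' minus_four_block_mat
  four_block_mat_eq_iff four_block_mat_eq_zero_iff zero_eq_four_block_mat_iff four_block_mat_empty_blocks
  mult_four_block_mat_row four_block_mat_col_mult
  zero_mat_eq_iff add_zero_mat_dims diff_zero_mat_dims add_inverse_mat

lemmas block_defs = dsum_def rowb_def colb_def blk_def

section \<open>Complexes and the homotopy category\<close>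

lemma phomD:
  assumes "phom A B \<phi>"
  shows "dim_row \<phi> = dim_row B" "dim_col \<phi> = dim_row A" "B * \<phi> = \<phi>" "\<phi> * A = \<phi>"
    "dim_col A = dim_row A" "dim_col B = dim_row B" "A * A = A" "B * B = B" "pobj A" "pobj B"
  using assms unfolding phom_def pobj_def carrier_mat_def by auto

lemma phomI:
  assumes "pobj A" "pobj B" "dim_row \<phi> = dim_row B" "dim_col \<phi> = dim_row A" "B * \<phi> = \<phi>" "\<phi> * A = \<phi>"
  shows "phom A B \<phi>"
  using assms unfolding phom_def carrier_mat_def by auto

lemma pobjI: "dim_col A = dim_row A \<Longrightarrow> A * A = A \<Longrightarrow> pobj A"
  unfolding pobj_def carrier_mat_def by auto

lemma phom_refl: "pobj A \<Longrightarrow> phom A A A"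
  unfolding phom_def pobj_def by auto

lemma phom_uminus: "phom A B \<phi> \<Longrightarrow> phom A B (- \<phi>)"
  unfolding phom_def pobj_def carrier_mat_def by auto

lemma is_complexD:
  assumes "is_complex X"
  shows "phom (fst X n) (fst X (n+1)) (snd X n)"
    "snd X (n+1) * snd X n = 0\<^sub>m (dim_row (fst X (n+2))) (dim_row (fst X n))"
  using assms unfolding is_complex_def by auto

lemma chain_mapD:
  assumes "chain_map X Y f"
  shows "phom (fst X n) (fst Y n) (f n)" "snd Y n * f n = f (n+1) * snd X n"
  using assms unfolding chain_map_def by auto

lemma chain_map_id:
  assumes "is_complex X"
  shows "chain_map X X (id_map X)"
  unfolding chain_map_def id_map_def
proof (intro conjI allI)
  fix n
  note d = phomD[OF is_complexD(1)[OF assms, of n]]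
  show "phom (fst X n) (fst X n) (fst X n)"
    using d(9) by (rule phom_refl)
  show "snd X n * fst X n = fst X (n+1) * snd X n"
    using d(3,4) by simp
qed

lemma homotopic_refl:
  assumes X: "is_complex X" and Y: "is_complex Y" and F: "chain_map X Y F"
  shows "homotopic X Y F F"
  unfolding homotopic_def
proof (intro exI[of _ "\<lambda>n. 0\<^sub>m (dim_row (fst Y (n-1))) (dim_row (fst X n))"] conjI allI)
  fix n
  note dX = phomD[OF is_complexD(1)[OF X, of n]]
    and dY = phomD[OF is_complexD(1)[OF Y, of "n-1"]]
    and dF = phomD[OF chain_mapD(1)[OF F, of n]]
  show "phom (fst X n) (fst Y (n-1)) (0\<^sub>m (dim_row (fst Y (n-1))) (dim_row (fst X n)))"
    using dX(9,5) dY(9,5) by (intro phomI) simp_all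
  show "F n - F n = snd Y (n-1) * 0\<^sub>m (dim_row (fst Y (n-1))) (dim_row (fst X n)) +
      0\<^sub>m (dim_row (fst Y (n+1-1))) (dim_row (fst X (n+1))) * snd X n"
    using dX(1,2) dY(1,2) dF(1,2) by (simp add: add_inverse_mat add_zero_mat_dims)
qed

lemma K_iso_refl:
  assumes "is_complex X"
  shows "K_iso X X (id_map X)"
proof -
  have "comp_map (id_map X) (id_map X) = id_map X"
    using phomD(7)[OF is_complexD(1)[OF assms]] by (simp add: comp_map_def id_map_def)
  then show ?thesis
    unfolding K_iso_def using chain_map_id[OF assms] homotopic_refl[OF assms assms chain_map_id[OF assms]]
    by (intro conjI exI[of _ "id_map X"]) simp_all
qed

lemma K_isoI:
  assumes Z: "is_complex Z" and \<gamma>: "chain_map C Z \<gamma>" and \<delta>: "chain_map Z C \<delta>"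
    and \<gamma>\<delta>: "comp_map \<gamma> \<delta> = id_map Z" and \<delta>\<gamma>: "homotopic C C (comp_map \<delta> \<gamma>) (id_map C)"
  shows "K_iso C Z \<gamma>"
  unfolding K_iso_def using \<gamma> \<delta> \<delta>\<gamma> homotopic_refl[OF Z Z chain_map_id[OF Z]]
  by (intro conjI exI[of _ \<delta>]) (simp_all add: \<gamma>\<delta>)

lemma tri_iso_replace_third:
  assumes X: "is_complex X" and Y: "is_complex Y" and Z: "is_complex Z"
    and u: "chain_map X Y u" and v': "chain_map Y Z v'"
    and w: "\<And>n. phom (fst C n) (fst X (n+1)) (w n)"
    and \<gamma>: "K_iso C Z \<gamma>" and \<gamma>v: "comp_map \<gamma> v = v'"
    and w\<gamma>: "homotopic C (shift X) w (comp_map w' \<gamma>)"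
  shows "tri_iso X Y C u v w X Y Z u v' w'"
  unfolding tri_iso_def
proof (rule exI[of _ "id_map X"], rule exI[of _ "id_map Y"], rule exI[of _ \<gamma>], intro conjI)
  show "K_iso X X (id_map X)" "K_iso Y Y (id_map Y)" "K_iso C Z \<gamma>"
    by (fact K_iso_refl[OF X] K_iso_refl[OF Y] \<gamma>)+
  have "comp_map (id_map Y) u = u" "comp_map u (id_map X) = u"
    using phomD(3,4)[OF chain_mapD(1)[OF u]] by (auto simp: comp_map_def id_map_def)
  then show "homotopic X Y (comp_map (id_map Y) u) (comp_map u (id_map X))"
    using homotopic_refl[OF X Y u] by simp
  have "comp_map v' (id_map Y) = v'"
    using phomD(4)[OF chain_mapD(1)[OF v']] by (auto simp: comp_map_def id_map_def)
  then show "homotopic Y Z (comp_map \<gamma> v) (comp_map v' (id_map Y))"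
    using homotopic_refl[OF Y Z v'] \<gamma>v by simp
  have "comp_map (shift_map (id_map X)) w = w"
    using phomD(3)[OF w] by (simp add: comp_map_def shift_map_def id_map_def)
  then show "homotopic C (shift X) (comp_map (shift_map (id_map X)) w) (comp_map w' \<gamma>)"
    using w\<gamma> by simp
qed

section \<open>Morphisms in standard form\<close>

locale standard_form =
  fixes i :: int and Xo Xd Yo Yd f X' Y' b c ex ell ey a :: "int \<Rightarrow> 'a::ring_1 mat"
  assumes X_complex: "is_complex (Xo, Xd)" and Y_complex: "is_complex (Yo, Yd)"
    and f: "chain_map (Xo, Xd) (Yo, Yd) f"
    and X'_obj: "\<forall>n<i. pobj (X' n)"
    and X_sum: "\<forall>n<i. Xo n = dsum (Yo n) (X' n)"
    and f_left: "\<forall>n<i. f n = rowb (Yo n) (0\<^sub>m (dim_row (Yo n)) (dim_row (X' n)))"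
    and b_hom: "\<forall>n\<le>i-2. phom (Yo n) (X' (n+1)) (b n)"
    and ex_hom: "\<forall>n\<le>i-2. phom (X' n) (X' (n+1)) (ex n)"
    and d_left: "\<forall>n\<le>i-2. Xd n = blk (Yd n) (0\<^sub>m (dim_row (Yo (n+1))) (dim_row (X' n))) (b n) (ex n)"
    and c_hom: "phom (Yo (i-1)) (Xo i) (c (i-1))"
    and ex_hom': "phom (X' (i-1)) (Xo i) (ex (i-1))"
    and d_im1: "Xd (i-1) = rowb (c (i-1)) (ex (i-1))"
    and Y'_obj: "\<forall>n>i. pobj (Y' n)"
    and Y_sum: "\<forall>n>i. Yo n = dsum (Xo n) (Y' n)"
    and f_right: "\<forall>n>i. f n = colb (Xo n) (0\<^sub>m (dim_row (Y' n)) (dim_row (Xo n)))"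
    and ell_hom: "phom (Yo i) (Xo (i+1)) (ell i)"
    and ey_hom: "phom (Yo i) (Y' (i+1)) (ey i)"
    and d_i: "Yd i = colb (ell i) (ey i)"
    and a_hom: "\<forall>n\<ge>i+1. phom (Y' n) (Xo (n+1)) (a n)"
    and ey_hom': "\<forall>n\<ge>i+1. phom (Y' n) (Y' (n+1)) (ey n)"
    and d_right: "\<forall>n\<ge>i+1. Yd n = blk (Xd n) (a n) (0\<^sub>m (dim_row (Y' (n+1))) (dim_row (Xo n))) (ey n)"
begin

lemma int_index_simps [simp]:
  "(n::int) + 1 + 1 = n + 2" "1 + (n::int) = n + 1"
  by simp_all

lemma X_diff_hom: "phom (Xo n) (Xo (n+1)) (Xd n)"
  using is_complexD(1)[OF X_complex] by simp

lemma Y_diff_hom: "phom (Yo n) (Yo (n+1)) (Yd n)"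
  using is_complexD(1)[OF Y_complex] by simp

lemma f_hom: "phom (Xo n) (Yo n) (f n)"
  using chain_mapD(1)[OF f] by simp

lemma X_dd: "Xd (n+1) * Xd n = 0\<^sub>m (dim_row (Xo (n+2))) (dim_row (Xo n))"
  using is_complexD(2)[OF X_complex] by simp

lemma Y_dd: "Yd (n+1) * Yd n = 0\<^sub>m (dim_row (Yo (n+2))) (dim_row (Yo n))"
  using is_complexD(2)[OF Y_complex] by simp

lemma f_comm: "Yd n * f n = f (n+1) * Xd n"
  using chain_mapD(2)[OF f] by simp

lemma Xo_obj: "pobj (Xo n)"
  using phomD(9)[OF X_diff_hom] .

lemma Yo_obj: "pobj (Yo n)"
  using phomD(9)[OF Y_diff_hom] .

lemma dims [simp]:
  "dim_col (Xo n) = dim_row (Xo n)" "dim_col (Yo n) = dim_row (Yo n)"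
  "dim_row (Xd n) = dim_row (Xo (n+1))" "dim_col (Xd n) = dim_row (Xo n)"
  "dim_row (Yd n) = dim_row (Yo (n+1))" "dim_col (Yd n) = dim_row (Yo n)"
  "dim_row (f n) = dim_row (Yo n)" "dim_col (f n) = dim_row (Xo n)"
  "dim_row (c (i-1)) = dim_row (Xo i)" "dim_col (c (i-1)) = dim_row (Yo (i-1))"
  "dim_row (ex (i-1)) = dim_row (Xo i)" "dim_col (ex (i-1)) = dim_row (X' (i-1))"
  "dim_row (ell i) = dim_row (Xo (i+1))" "dim_col (ell i) = dim_row (Yo i)"
  "dim_row (ey i) = dim_row (Y' (i+1))" "dim_col (ey i) = dim_row (Yo i)"
  using phomD(1,2,5,6)[OF X_diff_hom[of n]] phomD(1,2,5,6)[OF Y_diff_hom[of n]]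
    phomD(1,2)[OF f_hom[of n]] phomD(1,2)[OF c_hom] phomD(1,2)[OF ex_hom'] phomD(1,2)[OF ell_hom]
    phomD(1,2)[OF ey_hom]
  by simp_all

lemma dims_off_i [simp]:
  "n < i \<Longrightarrow> dim_col (X' n) = dim_row (X' n)"
  "n < i \<Longrightarrow> dim_row (Xo n) = dim_row (Yo n) + dim_row (X' n)"
  "n > i \<Longrightarrow> dim_col (Y' n) = dim_row (Y' n)"
  "n > i \<Longrightarrow> dim_row (Yo n) = dim_row (Xo n) + dim_row (Y' n)"
  "n \<le> i - 2 \<Longrightarrow> dim_row (b n) = dim_row (X' (n+1))"
  "n \<le> i - 2 \<Longrightarrow> dim_col (b n) = dim_row (Yo n)"
  "n \<le> i - 2 \<Longrightarrow> dim_row (ex n) = dim_row (X' (n+1))"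
  "n \<le> i - 2 \<Longrightarrow> dim_col (ex n) = dim_row (X' n)"
  "n \<ge> i + 1 \<Longrightarrow> dim_row (a n) = dim_row (Xo (n+1))"
  "n \<ge> i + 1 \<Longrightarrow> dim_col (a n) = dim_row (Y' n)"
  "n \<ge> i + 1 \<Longrightarrow> dim_row (ey n) = dim_row (Y' (n+1))"
  "n \<ge> i + 1 \<Longrightarrow> dim_col (ey n) = dim_row (Y' n)"
  subgoal using X'_obj unfolding pobj_def carrier_mat_def by auto
  subgoal using X_sum[rule_format, of n] unfolding dsum_def by simp
  subgoal using Y'_obj unfolding pobj_def carrier_mat_def by auto
  subgoal using Y_sum[rule_format, of n] unfolding dsum_def by simp
  subgoal using phomD(1)[OF b_hom[rule_format, of n]] by simp
  subgoal using phomD(2)[OF b_hom[rule_format, of n]] by simp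
  subgoal using phomD(1)[OF ex_hom[rule_format, of n]] by simp
  subgoal using phomD(2)[OF ex_hom[rule_format, of n]] by simp
  subgoal using phomD(1)[OF a_hom[rule_format, of n]] by simp
  subgoal using phomD(2)[OF a_hom[rule_format, of n]] by simp
  subgoal using phomD(1)[OF ey_hom'[rule_format, of n]] by simp
  subgoal using phomD(2)[OF ey_hom'[rule_format, of n]] by simp
  done

lemma unit_laws [simp]:
  "m = n + 1 \<Longrightarrow> Xo m * Xd n = Xd n" "Xd n * Xo n = Xd n"
  "m = n + 1 \<Longrightarrow> Yo m * Yd n = Yd n" "Yd n * Yo n = Yd n"
  "Yo n * f n = f n" "f n * Xo n = f n" "Xo n * Xo n = Xo n" "Yo n * Yo n = Yo n"
  "Xo i * c (i-1) = c (i-1)" "c (i-1) * Yo (i-1) = c (i-1)"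
  "Xo i * ex (i-1) = ex (i-1)" "ex (i-1) * X' (i-1) = ex (i-1)"
  "Xo (i+1) * ell i = ell i" "ell i * Yo i = ell i" "Y' (i+1) * ey i = ey i" "ey i * Yo i = ey i"
  using phomD(3,4,7,8)[OF X_diff_hom[of n]] phomD(3,4,7,8)[OF Y_diff_hom[of n]]
    phomD(3,4)[OF f_hom[of n]] phomD(3,4)[OF c_hom] phomD(3,4)[OF ex_hom'] phomD(3,4)[OF ell_hom]
    phomD(3,4)[OF ey_hom]
  by simp_all

lemma unit_laws_off_i [simp]:
  "n < i \<Longrightarrow> X' n * X' n = X' n" "n > i \<Longrightarrow> Y' n * Y' n = Y' n"
  "n \<le> i - 2 \<Longrightarrow> m = n + 1 \<Longrightarrow> X' m * b n = b n" "n \<le> i - 2 \<Longrightarrow> b n * Yo n = b n"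
  "n \<le> i - 2 \<Longrightarrow> m = n + 1 \<Longrightarrow> X' m * ex n = ex n" "n \<le> i - 2 \<Longrightarrow> ex n * X' n = ex n"
  "n \<ge> i + 1 \<Longrightarrow> m = n + 1 \<Longrightarrow> Xo m * a n = a n" "n \<ge> i + 1 \<Longrightarrow> a n * Y' n = a n"
  "n \<ge> i + 1 \<Longrightarrow> m = n + 1 \<Longrightarrow> Y' m * ey n = ey n" "n \<ge> i + 1 \<Longrightarrow> ey n * Y' n = ey n"
  subgoal using X'_obj unfolding pobj_def carrier_mat_def by auto
  subgoal using Y'_obj unfolding pobj_def carrier_mat_def by auto
  subgoal using phomD(3)[OF b_hom[rule_format, of n]] by simp
  subgoal using phomD(4)[OF b_hom[rule_format, of n]] by simp
  subgoal using phomD(3)[OF ex_hom[rule_format, of n]] by simp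
  subgoal using phomD(4)[OF ex_hom[rule_format, of n]] by simp
  subgoal using phomD(3)[OF a_hom[rule_format, of n]] by simp
  subgoal using phomD(4)[OF a_hom[rule_format, of n]] by simp
  subgoal using phomD(3)[OF ey_hom'[rule_format, of n]] by simp
  subgoal using phomD(4)[OF ey_hom'[rule_format, of n]] by simp
  done

lemma block_forms:
  "n < i \<Longrightarrow> Xo n = dsum (Yo n) (X' n)"
  "n > i \<Longrightarrow> Yo n = dsum (Xo n) (Y' n)"
  "n < i \<Longrightarrow> f n = rowb (Yo n) (0\<^sub>m (dim_row (Yo n)) (dim_row (X' n)))"
  "n > i \<Longrightarrow> f n = colb (Xo n) (0\<^sub>m (dim_row (Y' n)) (dim_row (Xo n)))"
  "n \<le> i - 2 \<Longrightarrow> Xd n = blk (Yd n) (0\<^sub>m (dim_row (Yo (n+1))) (dim_row (X' n))) (b n) (ex n)"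
  "Xd (i-1) = rowb (c (i-1)) (ex (i-1))"
  "Yd i = colb (ell i) (ey i)"
  "n \<ge> i + 1 \<Longrightarrow> Yd n = blk (Xd n) (a n) (0\<^sub>m (dim_row (Y' (n+1))) (dim_row (Xo n))) (ey n)"
  using X_sum Y_sum f_left f_right d_left d_im1 d_i d_right by auto

lemmas block_calc = block_forms block_simps block_defs

lemma X_dd_below:
  assumes "n \<le> i - 3"
  shows "b (n+1) * Yd n + ex (n+1) * b n = 0\<^sub>m (dim_row (X' (n+2))) (dim_row (Yo n))"
    "ex (n+1) * ex n = 0\<^sub>m (dim_row (X' (n+2))) (dim_row (X' n))"
  using X_dd[of n] assms block_forms(5)[of n] block_forms(5)[of "n+1"]
  by (simp_all add: block_simps block_defs)

lemma X_dd_at_i_minus_2: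
  "c (i-1) * Yd (i-2) + ex (i-1) * b (i-2) = 0\<^sub>m (dim_row (Xo i)) (dim_row (Yo (i-2)))"
  "ex (i-1) * ex (i-2) = 0\<^sub>m (dim_row (Xo i)) (dim_row (X' (i-2)))"
  using X_dd[of "i-2"] block_forms(5)[of "i-2"] block_forms(6) by (simp_all add: block_simps block_defs)

lemma f_comm_at_i_minus_1:
  "f i * c (i-1) = Yd (i-1)" "f i * ex (i-1) = 0\<^sub>m (dim_row (Yo i)) (dim_row (X' (i-1)))"
  using f_comm[of "i-1"] block_forms(3)[of "i-1"] block_forms(6) by (auto simp: block_simps block_defs)

lemma f_comm_at_i:
  "ell i * f i = Xd i" "ey i * f i = 0\<^sub>m (dim_row (Y' (i+1))) (dim_row (Xo i))"
  using f_comm[of i] block_forms(4)[of "i+1"] block_forms(7) by (auto simp: block_simps block_defs)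

lemma Y_dd_at_i:
  "Xd (i+1) * ell i + a (i+1) * ey i = 0\<^sub>m (dim_row (Xo (i+2))) (dim_row (Yo i))"
  "ey (i+1) * ey i = 0\<^sub>m (dim_row (Y' (i+2))) (dim_row (Yo i))"
  using Y_dd[of i] block_forms(8)[of "i+1"] block_forms(7) by (auto simp: block_simps block_defs)

lemma Y_dd_above:
  assumes "n \<ge> i + 1"
  shows "Xd (n+1) * a n + a (n+1) * ey n = 0\<^sub>m (dim_row (Xo (n+2))) (dim_row (Y' n))"
    "ey (n+1) * ey n = 0\<^sub>m (dim_row (Y' (n+2))) (dim_row (Y' n))"
  using Y_dd[of n] assms block_forms(8)[of "n+1"] block_forms(8)[of n] by (auto simp: block_simps block_defs)

lemma b_Yd: "n \<le> i - 3 \<Longrightarrow> b (n+1) * Yd n = - (ex (n+1) * b n)"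
  by (rule add_eq_zero_mat_imp_eq_uminus[OF X_dd_below(1)]) simp_all

lemma c_Yd: "c (i-1) * Yd (i-2) = - (ex (i-1) * b (i-2))"
  by (rule add_eq_zero_mat_imp_eq_uminus[OF X_dd_at_i_minus_2(1)]) simp_all

lemma Xd_ell: "Xd (i+1) * ell i = - (a (i+1) * ey i)"
  by (rule add_eq_zero_mat_imp_eq_uminus[OF Y_dd_at_i(1)]) simp_all

lemma Xd_a: "n \<ge> i + 1 \<Longrightarrow> Xd (n+1) * a n = - (a (n+1) * ey n)"
  by (rule add_eq_zero_mat_imp_eq_uminus[OF Y_dd_above(1)]) simp_all

definition "Zo = (\<lambda>n. if n < i - 1 then X' (n+1) else if n = i - 1 then Xo i
                   else if n = i then Yo i else Y' n)"

definition "Zd = (\<lambda>n. if n \<le> i - 2 then - ex (n+1) else if n = i - 1 then f i else ey n)"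

definition "g = (\<lambda>n. if n < i - 1 then b n else if n = i - 1 then c (i-1)
                  else if n = i then Yo i
                  else rowb (0\<^sub>m (dim_row (Y' n)) (dim_row (Xo n))) (Y' n))"

definition "w = (\<lambda>n. if n < i - 1 then colb (0\<^sub>m (dim_row (Yo (n+1))) (dim_row (X' (n+1)))) (X' (n+1))
                  else if n = i - 1 then Xo i
                  else if n = i then - ell i else - a n)"

lemma Z_diff_hom: "phom (Zo n) (Zo (n+1)) (Zd n)"
proof -
  consider "n \<le> i - 3" | "n = i - 2" | "n = i - 1" | "n = i" | "n \<ge> i + 1" by linarith
  then show ?thesis
  proof cases
    case 1 then show ?thesis using ex_hom[rule_format, of "n+1"] by (simp add: Zo_def Zd_def phom_uminus)
  next
    case 2 then show ?thesis using ex_hom' by (simp add: Zo_def Zd_def phom_uminus)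
  next
    case 3 then show ?thesis using f_hom[of i] by (simp add: Zo_def Zd_def)
  next
    case 4 then show ?thesis using ey_hom by (simp add: Zo_def Zd_def)
  next
    case 5 then show ?thesis using ey_hom'[rule_format, of n] by (simp add: Zo_def Zd_def)
  qed
qed

lemma Z_dd: "Zd (n+1) * Zd n = 0\<^sub>m (dim_row (Zo (n+2))) (dim_row (Zo n))"
proof -
  consider "n \<le> i - 4" | "n = i - 3" | "n = i - 2" | "n = i - 1" | "n = i" | "n \<ge> i + 1" by linarith
  then show ?thesis
  proof cases
    case 1 then show ?thesis using X_dd_below(2)[of "n+1"] by (simp add: Zo_def Zd_def)
  next
    case 2 then show ?thesis using X_dd_at_i_minus_2(2) by (simp add: Zo_def Zd_def)
  next
    case 3 then show ?thesis using f_comm_at_i_minus_1(2) by (simp add: Zo_def Zd_def)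
  next
    case 4 then show ?thesis using f_comm_at_i(2) by (simp add: Zo_def Zd_def)
  next
    case 5 then show ?thesis using Y_dd_at_i(2) by (simp add: Zo_def Zd_def)
  next
    case 6 then show ?thesis using Y_dd_above(2)[of n] by (simp add: Zo_def Zd_def)
  qed
qed

lemma Z_complex: "is_complex (Zo, Zd)"
  unfolding is_complex_def using Z_diff_hom Z_dd by simp

lemma g_hom: "phom (Yo n) (Zo n) (g n)"
proof -
  consider "n < i - 1" | "n = i - 1" | "n = i" | "n > i" by linarith
  then show ?thesis
  proof cases
    case 1 then show ?thesis using b_hom[rule_format, of n] by (simp add: Zo_def g_def)
  next
    case 2 then show ?thesis using c_hom by (simp add: Zo_def g_def)
  next
    case 3 then show ?thesis using Yo_obj[of i] by (simp add: Zo_def g_def phom_refl)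
  next
    case 4 then show ?thesis using Yo_obj[of n] Y'_obj
      by (intro phomI) (auto simp: Zo_def g_def block_calc)
  qed
qed

lemma g_comm: "Zd n * g n = g (n+1) * Yd n"
proof -
  consider "n \<le> i - 3" | "n = i - 2" | "n = i - 1" | "n = i" | "n \<ge> i + 1" by linarith
  then show ?thesis
  proof cases
    case 1 then show ?thesis using b_Yd[of n] by (simp add: Zd_def g_def)
  next
    case 2 then show ?thesis using c_Yd by (simp add: Zd_def g_def)
  next
    case 3 then show ?thesis using f_comm_at_i_minus_1(1) by (simp add: Zd_def g_def)
  next
    case 4 then show ?thesis by (simp add: Zd_def g_def block_calc)
  next
    case 5 then show ?thesis by (simp add: Zd_def g_def block_calc)
  qed
qed

lemma g_chain_map: "chain_map (Yo, Yd) (Zo, Zd) g"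
  unfolding chain_map_def using g_hom g_comm by simp

lemma w_hom: "phom (Zo n) (Xo (n+1)) (w n)"
proof -
  consider "n < i - 1" | "n = i - 1" | "n = i" | "n > i" by linarith
  then show ?thesis
  proof cases
    case 1 then show ?thesis using Xo_obj[of "n+1"] X'_obj
      by (intro phomI) (auto simp: Zo_def w_def block_calc)
  next
    case 2 then show ?thesis using Xo_obj[of i] by (simp add: Zo_def w_def phom_refl)
  next
    case 3 then show ?thesis using ell_hom by (simp add: Zo_def w_def phom_uminus)
  next
    case 4 then show ?thesis using a_hom[rule_format, of n] by (simp add: Zo_def w_def phom_uminus)
  qed
qed

lemma w_comm: "- Xd (n+1) * w n = w (n+1) * Zd n"
proof -
  consider "n \<le> i - 3" | "n = i - 2" | "n = i - 1" | "n = i" | "n \<ge> i + 1" by linarith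
  then show ?thesis
  proof cases
    case 1 then show ?thesis by (simp add: Zd_def w_def block_calc)
  next
    case 2 then show ?thesis by (simp add: Zd_def w_def block_calc)
  next
    case 3 then show ?thesis using f_comm_at_i(1) by (simp add: Zd_def w_def)
  next
    case 4 then show ?thesis using Xd_ell by (simp add: Zd_def w_def)
  next
    case 5 then show ?thesis using Xd_a[of n] by (simp add: Zd_def w_def)
  qed
qed

lemma w_chain_map: "chain_map (Zo, Zd) (shift (Xo, Xd)) w"
  unfolding chain_map_def shift_def using w_hom w_comm by simp

abbreviation "Cf \<equiv> cone (Xo, Xd) (Yo, Yd) f"

lemma Cf_simps [simp]:
  "fst Cf n = dsum (Xo (n+1)) (Yo n)"
  "snd Cf n = blk (- Xd (n+1)) (0\<^sub>m (dim_row (Xo (n+2))) (dim_row (Yo n))) (f (n+1)) (Yd n)"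
  unfolding cone_def by simp_all

lemma Cf_obj: "pobj (fst Cf n)"
  by (rule pobjI) (simp_all add: block_calc)

lemma cone_in_eq: "cone_in (Xo, Xd) (Yo, Yd) n = colb (0\<^sub>m (dim_row (Xo (n+1))) (dim_row (Yo n))) (Yo n)"
  unfolding cone_in_def by simp

lemma cone_pr_eq: "cone_pr (Xo, Xd) (Yo, Yd) n = rowb (Xo (n+1)) (0\<^sub>m (dim_row (Xo (n+1))) (dim_row (Yo n)))"
  unfolding cone_pr_def by simp

lemma cone_pr_hom: "phom (fst Cf n) (Xo (n+1)) (cone_pr (Xo, Xd) (Yo, Yd) n)"
  by (intro phomI[OF Cf_obj Xo_obj]) (simp_all add: cone_pr_eq block_calc)

definition "\<gamma> = (\<lambda>n. if n < i - 1
      then rowb (rowb (0\<^sub>m (dim_row (X' (n+1))) (dim_row (Yo (n+1)))) (X' (n+1))) (b n)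
    else if n = i - 1 then rowb (Xo i) (c (i-1))
    else if n = i then rowb (0\<^sub>m (dim_row (Yo i)) (dim_row (Xo (i+1)))) (Yo i)
    else rowb (0\<^sub>m (dim_row (Y' n)) (dim_row (Xo (n+1)))) (rowb (0\<^sub>m (dim_row (Y' n)) (dim_row (Xo n))) (Y' n)))"

definition "\<delta> = (\<lambda>n. if n < i - 1
      then colb (colb (0\<^sub>m (dim_row (Yo (n+1))) (dim_row (X' (n+1)))) (X' (n+1)))
        (0\<^sub>m (dim_row (Yo n)) (dim_row (X' (n+1))))
    else if n = i - 1 then colb (Xo i) (0\<^sub>m (dim_row (Yo (i-1))) (dim_row (Xo i)))
    else if n = i then colb (- ell i) (Yo i)
    else colb (- a n) (colb (0\<^sub>m (dim_row (Xo n)) (dim_row (Y' n))) (Y' n)))"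

definition "\<sigma> = (\<lambda>n. if n < i
      then blk (0\<^sub>m (dim_row (Xo n)) (dim_row (Xo (n+1))))
        (colb (- Yo n) (0\<^sub>m (dim_row (X' n)) (dim_row (Yo n))))
        (0\<^sub>m (dim_row (Yo (n-1))) (dim_row (Xo (n+1)))) (0\<^sub>m (dim_row (Yo (n-1))) (dim_row (Yo n)))
    else if n = i then 0\<^sub>m (dim_row (Xo i) + dim_row (Yo (i-1))) (dim_row (Xo (i+1)) + dim_row (Yo i))
    else blk (0\<^sub>m (dim_row (Xo n)) (dim_row (Xo (n+1))))
      (rowb (- Xo n) (0\<^sub>m (dim_row (Xo n)) (dim_row (Y' n))))
      (0\<^sub>m (dim_row (Yo (n-1))) (dim_row (Xo (n+1)))) (0\<^sub>m (dim_row (Yo (n-1))) (dim_row (Yo n))))"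

definition "\<eta> = (\<lambda>n. if n < i
      then blk (0\<^sub>m (dim_row (Yo n)) (dim_row (Xo (n+1)))) (Yo n)
        (0\<^sub>m (dim_row (X' n)) (dim_row (Xo (n+1)))) (0\<^sub>m (dim_row (X' n)) (dim_row (Yo n)))
    else if n = i then 0\<^sub>m (dim_row (Xo i)) (dim_row (Xo (i+1)) + dim_row (Yo i))
    else rowb (0\<^sub>m (dim_row (Xo n)) (dim_row (Xo (n+1))))
      (rowb (Xo n) (0\<^sub>m (dim_row (Xo n)) (dim_row (Y' n)))))"

lemma \<gamma>_hom: "phom (fst Cf n) (Zo n) (\<gamma> n)"
proof -
  consider "n < i - 1" | "n = i - 1" | "n = i" | "n > i" by linarith
  then show ?thesis
  proof cases
    case 1 then show ?thesis using X'_obj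
      by (intro phomI[OF Cf_obj]) (auto simp: Zo_def \<gamma>_def block_calc)
  next
    case 2 then show ?thesis using Xo_obj[of i]
      by (intro phomI[OF Cf_obj]) (auto simp: Zo_def \<gamma>_def block_calc)
  next
    case 3 then show ?thesis using Yo_obj[of i]
      by (intro phomI[OF Cf_obj]) (auto simp: Zo_def \<gamma>_def block_calc)
  next
    case 4 then show ?thesis using Y'_obj
      by (intro phomI[OF Cf_obj]) (auto simp: Zo_def \<gamma>_def block_calc)
  qed
qed

lemma \<gamma>_comm: "Zd n * \<gamma> n = \<gamma> (n+1) * snd Cf n"
proof -
  consider "n \<le> i - 3" | "n = i - 2" | "n = i - 1" | "n = i" | "n \<ge> i + 1" by linarith
  then show ?thesis
  proof cases
    case 1 then show ?thesis using b_Yd[of n] by (simp add: Zd_def \<gamma>_def block_calc)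
  next
    case 2 then show ?thesis using c_Yd by (simp add: Zd_def \<gamma>_def block_calc)
  next
    case 3 then show ?thesis using f_comm_at_i_minus_1(1) by (simp add: Zd_def \<gamma>_def block_calc)
  next
    case 4 then show ?thesis by (simp add: Zd_def \<gamma>_def block_calc)
  next
    case 5 then show ?thesis by (simp add: Zd_def \<gamma>_def block_calc)
  qed
qed

lemma \<delta>_hom: "phom (Zo n) (fst Cf n) (\<delta> n)"
proof -
  consider "n < i - 1" | "n = i - 1" | "n = i" | "n > i" by linarith
  then show ?thesis
  proof cases
    case 1 then show ?thesis using X'_obj
      by (intro phomI[OF _ Cf_obj]) (auto simp: Zo_def \<delta>_def block_calc)
  next
    case 2 then show ?thesis using Xo_obj[of i]
      by (intro phomI[OF _ Cf_obj]) (auto simp: Zo_def \<delta>_def block_calc)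
  next
    case 3 then show ?thesis using Yo_obj[of i]
      by (intro phomI[OF _ Cf_obj]) (auto simp: Zo_def \<delta>_def block_calc)
  next
    case 4 then show ?thesis using Y'_obj
      by (intro phomI[OF _ Cf_obj]) (auto simp: Zo_def \<delta>_def block_calc)
  qed
qed

lemma \<delta>_comm: "snd Cf n * \<delta> n = \<delta> (n+1) * Zd n"
proof -
  consider "n \<le> i - 3" | "n = i - 2" | "n = i - 1" | "n = i" | "n \<ge> i + 1" by linarith
  then show ?thesis
  proof cases
    case 1 then show ?thesis by (simp add: Zd_def \<delta>_def block_calc)
  next
    case 2 then show ?thesis by (simp add: Zd_def \<delta>_def block_calc)
  next
    case 3 then show ?thesis using f_comm_at_i(1) by (simp add: Zd_def \<delta>_def block_calc)
  next
    case 4 then show ?thesis using Xd_ell by (simp add: Zd_def \<delta>_def block_calc)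
  next
    case 5 then show ?thesis using Xd_a[of n] by (simp add: Zd_def \<delta>_def block_calc)
  qed
qed

lemma \<gamma>_\<delta>: "\<gamma> n * \<delta> n = Zo n"
proof -
  consider "n < i - 1" | "n = i - 1" | "n = i" | "n > i" by linarith
  then show ?thesis
    by cases (simp_all add: Zo_def \<gamma>_def \<delta>_def block_calc)
qed

lemma \<sigma>_hom: "phom (fst Cf n) (fst Cf (n-1)) (\<sigma> n)"
proof -
  consider "n < i" | "n = i" | "n > i" by linarith
  then show ?thesis
    by cases (intro phomI[OF Cf_obj Cf_obj]; auto simp: \<sigma>_def block_calc)+
qed

lemma \<delta>_\<gamma>_homotopy: "\<delta> n * \<gamma> n - fst Cf n = snd Cf (n-1) * \<sigma> n + \<sigma> (n+1) * snd Cf n"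
proof -
  consider "n \<le> i - 2" | "n = i - 1" | "n = i" | "n \<ge> i + 1" by linarith
  then show ?thesis
    by cases (simp_all add: \<sigma>_def \<delta>_def \<gamma>_def block_calc)
qed

lemma cone_iso: "K_iso Cf (Zo, Zd) \<gamma>"
proof (rule K_isoI[OF Z_complex])
  show "chain_map Cf (Zo, Zd) \<gamma>"
    unfolding chain_map_def using \<gamma>_hom \<gamma>_comm by simp
  show "chain_map (Zo, Zd) Cf \<delta>"
    unfolding chain_map_def using \<delta>_hom \<delta>_comm by simp
  show "comp_map \<gamma> \<delta> = id_map (Zo, Zd)"
    using \<gamma>_\<delta> by (simp add: comp_map_def id_map_def)
  show "homotopic Cf Cf (comp_map \<delta> \<gamma>) (id_map Cf)"
    unfolding homotopic_def comp_map_def id_map_def using \<sigma>_hom \<delta>_\<gamma>_homotopy by blast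
qed

lemma \<gamma>_cone_in: "comp_map \<gamma> (cone_in (Xo, Xd) (Yo, Yd)) = g"
proof
  fix n
  consider "n < i - 1" | "n = i - 1" | "n = i" | "n > i" by linarith
  then show "comp_map \<gamma> (cone_in (Xo, Xd) (Yo, Yd)) n = g n"
    by cases (simp_all add: comp_map_def cone_in_eq g_def \<gamma>_def block_calc)
qed

lemma \<eta>_hom: "phom (fst Cf n) (Xo n) (\<eta> n)"
proof -
  consider "n < i" | "n = i" | "n > i" by linarith
  then show ?thesis
    using Xo_obj[of n] by cases (intro phomI[OF Cf_obj]; auto simp: \<eta>_def block_calc)+
qed

lemma cone_pr_homotopy:
  "cone_pr (Xo, Xd) (Yo, Yd) n - w n * \<gamma> n = - Xd n * \<eta> n + \<eta> (n+1) * snd Cf n"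
proof -
  consider "n \<le> i - 2" | "n = i - 1" | "n = i" | "n \<ge> i + 1" by linarith
  then show ?thesis
  proof cases
    case 1
    have Xo: "Xo (n+1) = dsum (Yo (n+1)) (X' (n+1))"
      using 1 by (simp add: block_forms)
    have "rowb (Xo (n+1)) (0\<^sub>m (dim_row (Xo (n+1))) (dim_row (Yo n))) =
      blk (rowb (Yo (n+1)) (0\<^sub>m (dim_row (Yo (n+1))) (dim_row (X' (n+1)))))
        (0\<^sub>m (dim_row (Yo (n+1))) (dim_row (Yo n)))
        (rowb (0\<^sub>m (dim_row (X' (n+1))) (dim_row (Yo (n+1)))) (X' (n+1)))
        (0\<^sub>m (dim_row (X' (n+1))) (dim_row (Yo n)))"
      unfolding Xo rowb_def blk_def dsum_def using 1 by (subst four_block_mat_regroup_rows) simp_all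
    then show ?thesis
      unfolding cone_pr_eq using 1 by (simp add: \<eta>_def w_def \<gamma>_def block_calc)
  qed (simp_all add: cone_pr_eq \<eta>_def w_def \<gamma>_def block_calc)
qed

lemma w_\<gamma>_homotopic: "homotopic Cf (shift (Xo, Xd)) (cone_pr (Xo, Xd) (Yo, Yd)) (comp_map w \<gamma>)"
  unfolding homotopic_def comp_map_def shift_def using \<eta>_hom cone_pr_homotopy by (intro exI[of _ \<eta>]) simp

lemma standard_triangle_iso:
  "is_complex (Zo, Zd) \<and> chain_map (Yo, Yd) (Zo, Zd) g \<and> chain_map (Zo, Zd) (shift (Xo, Xd)) w \<and>
    tri_iso (Xo, Xd) (Yo, Yd) Cf f (cone_in (Xo, Xd) (Yo, Yd)) (cone_pr (Xo, Xd) (Yo, Yd))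
      (Xo, Xd) (Yo, Yd) (Zo, Zd) f g w"
proof (intro conjI Z_complex g_chain_map w_chain_map)
  show "tri_iso (Xo, Xd) (Yo, Yd) Cf f (cone_in (Xo, Xd) (Yo, Yd)) (cone_pr (Xo, Xd) (Yo, Yd))
      (Xo, Xd) (Yo, Yd) (Zo, Zd) f g w"
    using cone_pr_hom
    by (intro tri_iso_replace_third[OF X_complex Y_complex Z_complex f g_chain_map _ cone_iso
          \<gamma>_cone_in w_\<gamma>_homotopic]) simp
qed

end

theorem proposition3:
  fixes scale :: "'k::field \<Rightarrow> 'a::ring_1 \<Rightarrow> 'a"
    and J :: "int set" and i :: int
    and Xo Xd Yo Yd f :: "int \<Rightarrow> 'a mat"
    and X' Y' b c ex ell ey a :: "int \<Rightarrow> 'a mat"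
  assumes alg: "fd_algebra scale"
    and nss: "\<not> semisimple_ring TYPE('a)"
    and J: "is_interval J"
    and X: "in_CJ J (Xo, Xd)" and Y: "in_CJ J (Yo, Yd)"
    and f: "chain_map (Xo, Xd) (Yo, Yd) f"
    and sirr: "sirreducible (Xo, Xd) (Yo, Yd) f"
    and irr: "irreducible_mor (Xo i) (Yo i) (f i)"
    \<comment> \<open>standard form, left part\<close>
    and X'_obj: "\<forall>n<i. pobj (X' n)"
    and X_sum: "\<forall>n<i. Xo n = dsum (Yo n) (X' n)"
    and f_left: "\<forall>n<i. f n = rowb (Yo n) (0\<^sub>m (dim_row (Yo n)) (dim_row (X' n)))"
    and b_hom: "\<forall>n\<le>i-2. phom (Yo n) (X' (n+1)) (b n)"
    and ex_hom: "\<forall>n\<le>i-2. phom (X' n) (X' (n+1)) (ex n)"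
    and d_left: "\<forall>n\<le>i-2. Xd n = blk (Yd n) (0\<^sub>m (dim_row (Yo (n+1))) (dim_row (X' n))) (b n) (ex n)"
    and c_hom: "phom (Yo (i-1)) (Xo i) (c (i-1))"
    and ex_hom': "phom (X' (i-1)) (Xo i) (ex (i-1))"
    and d_im1: "Xd (i-1) = rowb (c (i-1)) (ex (i-1))"
    \<comment> \<open>standard form, right part\<close>
    and Y'_obj: "\<forall>n>i. pobj (Y' n)"
    and Y_sum: "\<forall>n>i. Yo n = dsum (Xo n) (Y' n)"
    and f_right: "\<forall>n>i. f n = colb (Xo n) (0\<^sub>m (dim_row (Y' n)) (dim_row (Xo n)))"
    and ell_hom: "phom (Yo i) (Xo (i+1)) (ell i)"
    and ey_hom: "phom (Yo i) (Y' (i+1)) (ey i)"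
    and d_i: "Yd i = colb (ell i) (ey i)"
    and a_hom: "\<forall>n\<ge>i+1. phom (Y' n) (Xo (n+1)) (a n)"
    and ey_hom': "\<forall>n\<ge>i+1. phom (Y' n) (Y' (n+1)) (ey n)"
    and d_right: "\<forall>n\<ge>i+1. Yd n = blk (Xd n) (a n) (0\<^sub>m (dim_row (Y' (n+1))) (dim_row (Xo n))) (ey n)"
  shows
    "let Zo = (\<lambda>n. if n < i - 1 then X' (n+1) else if n = i - 1 then Xo i
                   else if n = i then Yo i else Y' n);
         Zd = (\<lambda>n. if n \<le> i - 2 then - ex (n+1) else if n = i - 1 then f i else ey n);
         g = (\<lambda>n. if n < i - 1 then b n else if n = i - 1 then c (i-1)
                  else if n = i then Yo i
                  else rowb (0\<^sub>m (dim_row (Y' n)) (dim_row (Xo n))) (Y' n));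
         w = (\<lambda>n. if n < i - 1 then colb (0\<^sub>m (dim_row (Yo (n+1))) (dim_row (X' (n+1)))) (X' (n+1))
                  else if n = i - 1 then Xo i
                  else if n = i then - ell i else - a n)
     in is_complex (Zo, Zd) \<and> chain_map (Yo, Yd) (Zo, Zd) g \<and>
        chain_map (Zo, Zd) (shift (Xo, Xd)) w \<and>
        tri_iso (Xo, Xd) (Yo, Yd) (cone (Xo, Xd) (Yo, Yd) f) f (cone_in (Xo, Xd) (Yo, Yd))
                (cone_pr (Xo, Xd) (Yo, Yd))
                (Xo, Xd) (Yo, Yd) (Zo, Zd) f g w"
proof -
  \<comment> \<open>Only the standard form enters.\<close>
  interpret standard_form i Xo Xd Yo Yd f X' Y' b c ex ell ey a
    by unfold_locales (use assms in \<open>simp_all add: in_CJ_def\<close>)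
  show ?thesis
    using standard_triangle_iso by (simp only: Let_def Zo_def Zd_def g_def w_def)
qed

end
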